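(* Let $R$ be a commutative elementary divisor domain, let $E,\Phi$ be $n\times n$ $d$-matrices, and let $A=P_A^{-1}EQ_A^{-1}$ and $B=P_B^{-1}\Phi Q_B^{-1}$ with $P_A,Q_A,P_B,Q_B\in GL_n(R)$. Then $B$ is a left divisor of $A$ (i.e. $A=BC$ for some $C\in M_n(R)$) if and only if $P_B=LP_A$ for some $L\in\mathbf L(E,\Phi)$.
   Context: Elementary divisor domain: commutative integral domain over which every matrix is equivalent to a $d$-matrix, i.e. a diagonal matrix $\mathrm{diag}(\varphi_1,\dots)$ with $\varphi_i\mid\varphi_{i+1}$. For $n\times n$ $d$-matrices $E,\Phi$: $\mathbf L(E,\Phi)=\{L\in GL_n(R):\ \exists S\in M_n(R),\ LE=\Phi S\}$. *)

theory Defs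
  imports "Jordan_Normal_Form.Matrix"
begin

definition d_matrix :: "'a::comm_ring_1 mat \<Rightarrow> bool" where
  "d_matrix D \<longleftrightarrow>
     (\<forall>i j. i < dim_row D \<longrightarrow> j < dim_col D \<longrightarrow> i \<noteq> j \<longrightarrow> D $$ (i, j) = 0) \<and>
     (\<forall>i. Suc i < min (dim_row D) (dim_col D) \<longrightarrow> D $$ (i, i) dvd D $$ (Suc i, Suc i))"

definition elementary_divisor_domain :: "'a::idom itself \<Rightarrow> bool" where
  "elementary_divisor_domain TYPE('a) \<longleftrightarrow>
     (\<forall>m k (A :: 'a mat). A \<in> carrier_mat m k \<longrightarrow>
        (\<exists>P Q. P \<in> carrier_mat m m \<and> Q \<in> carrier_mat k k \<and>
               invertible_mat P \<and> invertible_mat Q \<and> d_matrix (P * A * Q)))"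

definition L_set :: "nat \<Rightarrow> 'a::comm_ring_1 mat \<Rightarrow> 'a mat \<Rightarrow> 'a mat set" where
  "L_set n E \<Phi> = {L. L \<in> carrier_mat n n \<and> invertible_mat L \<and>
       (\<exists>S \<in> carrier_mat n n. L * E = \<Phi> * S)}"

end

theory Submission
  imports Defs
begin

(* Left divisibility A = B C is unchanged when A and B are multiplied on the left by the same
   invertible matrix, and on the right by (possibly different) invertible matrices. Hence
   B | A iff Phi | P_B P_A^-1 E; and P_B = L P_A forces L = P_B P_A^-1, which is invertible, so
   the condition L E = Phi S of L(E, Phi) is the same divisibility. *)

definition left_dvd_mat :: "nat \<Rightarrow> 'a::semiring_0 mat \<Rightarrow> 'a mat \<Rightarrow> bool" where
  "left_dvd_mat n B A \<longleftrightarrow> (\<exists>C \<in> carrier_mat n n. A = B * C)"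

lemma invertible_matE:
  fixes M :: "'a::semiring_1 mat"
  assumes M: "M \<in> carrier_mat n n" and "invertible_mat M"
  obtains N where "N \<in> carrier_mat n n" "M * N = 1\<^sub>m n" "N * M = 1\<^sub>m n"
proof -
  obtain N where MN: "M * N = 1\<^sub>m (dim_row M)" and NM: "N * M = 1\<^sub>m (dim_row N)"
    using assms(2) unfolding invertible_mat_def inverts_mat_def by blast
  have "dim_row N = n" "dim_col N = n"
    using arg_cong[OF NM, of dim_col] arg_cong[OF MN, of dim_col] M by auto
  then show ?thesis
    using that MN NM M by auto
qed

lemma invertible_matI:
  fixes M :: "'a::semiring_1 mat"
  assumes "M \<in> carrier_mat n n" "N \<in> carrier_mat n n" "M * N = 1\<^sub>m n" "N * M = 1\<^sub>m n"
  shows "invertible_mat M"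
  using assms unfolding invertible_mat_def inverts_mat_def by auto

lemma invertible_mult_mat:
  fixes M N :: "'a::semiring_1 mat"
  assumes M: "M \<in> carrier_mat n n" "invertible_mat M"
    and N: "N \<in> carrier_mat n n" "invertible_mat N"
  shows "invertible_mat (M * N)"
proof -
  obtain M' where M': "M' \<in> carrier_mat n n" "M * M' = 1\<^sub>m n" "M' * M = 1\<^sub>m n"
    using invertible_matE[OF M] .
  obtain N' where N': "N' \<in> carrier_mat n n" "N * N' = 1\<^sub>m n" "N' * N = 1\<^sub>m n"
    using invertible_matE[OF N] .
  have "M * N * (N' * M') = M * ((N * N') * M')"
    using M(1) N(1) M'(1) N'(1) by (simp add: assoc_mult_mat[of _ n n _ n _ n])
  also have "\<dots> = 1\<^sub>m n"
    using M M' N' by simp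
  finally have right: "M * N * (N' * M') = 1\<^sub>m n" .
  have "N' * M' * (M * N) = N' * ((M' * M) * N)"
    using M(1) N(1) M'(1) N'(1) by (simp add: assoc_mult_mat[of _ n n _ n _ n])
  also have "\<dots> = 1\<^sub>m n"
    using N M' N' by simp
  finally have left: "N' * M' * (M * N) = 1\<^sub>m n" .
  show ?thesis
    using M N M' N' right left by (intro invertible_matI[of _ n "N' * M'"]) simp_all
qed

lemma left_dvd_mat_mult_right_divisor_iff:
  fixes B A Q :: "'a::semiring_1 mat"
  assumes B: "B \<in> carrier_mat n n" and Q: "Q \<in> carrier_mat n n" "invertible_mat Q"
  shows "left_dvd_mat n (B * Q) A \<longleftrightarrow> left_dvd_mat n B A"
proof
  assume "left_dvd_mat n (B * Q) A"
  then obtain C where C: "C \<in> carrier_mat n n" "A = B * Q * C"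
    unfolding left_dvd_mat_def by blast
  then have "A = B * (Q * C)"
    using B Q by (simp add: assoc_mult_mat[of _ n n _ n _ n])
  with C Q show "left_dvd_mat n B A"
    unfolding left_dvd_mat_def by (intro bexI[of _ "Q * C"]) auto
next
  assume "left_dvd_mat n B A"
  then obtain C where C: "C \<in> carrier_mat n n" "A = B * C"
    unfolding left_dvd_mat_def by blast
  obtain Q' where Q': "Q' \<in> carrier_mat n n" "Q * Q' = 1\<^sub>m n"
    using invertible_matE[OF Q] by blast
  have "B * Q * (Q' * C) = B * ((Q * Q') * C)"
    using B Q(1) Q'(1) C(1) by (simp add: assoc_mult_mat[of _ n n _ n _ n])
  also have "\<dots> = A"
    using Q'(2) C by simp
  finally have "A = B * Q * (Q' * C)" ..
  then show "left_dvd_mat n (B * Q) A"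
    using Q'(1) C(1) unfolding left_dvd_mat_def by (intro bexI[of _ "Q' * C"]) auto
qed

lemma left_dvd_mat_mult_right_iff:
  fixes B A Q :: "'a::semiring_1 mat"
  assumes B: "B \<in> carrier_mat n n" and A: "A \<in> carrier_mat n n"
    and Q: "Q \<in> carrier_mat n n" "invertible_mat Q"
  shows "left_dvd_mat n B (A * Q) \<longleftrightarrow> left_dvd_mat n B A"
proof
  assume "left_dvd_mat n B (A * Q)"
  then obtain C where C: "C \<in> carrier_mat n n" "A * Q = B * C"
    unfolding left_dvd_mat_def by blast
  obtain Q' where Q': "Q' \<in> carrier_mat n n" "Q * Q' = 1\<^sub>m n"
    using invertible_matE[OF Q] by blast
  have "A = A * Q * Q'"
    using A Q(1) Q' by (simp add: assoc_mult_mat[of _ n n _ n _ n])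
  also have "\<dots> = B * (C * Q')"
    using B C Q'(1) by (simp add: assoc_mult_mat[of _ n n _ n _ n])
  finally show "left_dvd_mat n B A"
    using Q'(1) C(1) unfolding left_dvd_mat_def by (intro bexI[of _ "C * Q'"]) auto
next
  assume "left_dvd_mat n B A"
  then obtain C where C: "C \<in> carrier_mat n n" "A = B * C"
    unfolding left_dvd_mat_def by blast
  then have "A * Q = B * (C * Q)"
    using B Q by (simp add: assoc_mult_mat[of _ n n _ n _ n])
  with C Q show "left_dvd_mat n B (A * Q)"
    unfolding left_dvd_mat_def by (intro bexI[of _ "C * Q"]) auto
qed

lemma left_dvd_mat_mult_left_iff:
  fixes P B A :: "'a::semiring_1 mat"
  assumes B: "B \<in> carrier_mat n n" and A: "A \<in> carrier_mat n n"
    and P: "P \<in> carrier_mat n n" "invertible_mat P"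
  shows "left_dvd_mat n (P * B) (P * A) \<longleftrightarrow> left_dvd_mat n B A"
proof
  assume "left_dvd_mat n (P * B) (P * A)"
  then obtain C where C: "C \<in> carrier_mat n n" "P * A = P * B * C"
    unfolding left_dvd_mat_def by blast
  obtain P' where P': "P' \<in> carrier_mat n n" "P' * P = 1\<^sub>m n"
    using invertible_matE[OF P] by blast
  have "A = P' * (P * A)"
    using A P' P(1) by (simp add: assoc_mult_mat[of _ n n _ n _ n, symmetric])
  also have "\<dots> = P' * P * B * C"
    using B C P'(1) P(1) by (simp add: assoc_mult_mat[of _ n n _ n _ n])
  also have "\<dots> = B * C"
    using B P'(2) by simp
  finally show "left_dvd_mat n B A"
    using C(1) unfolding left_dvd_mat_def by blast
next
  assume "left_dvd_mat n B A"
  then obtain C where C: "C \<in> carrier_mat n n" "A = B * C"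
    unfolding left_dvd_mat_def by blast
  then have "P * A = P * B * C"
    using B P by (simp add: assoc_mult_mat[of _ n n _ n _ n])
  with C show "left_dvd_mat n (P * B) (P * A)"
    unfolding left_dvd_mat_def by blast
qed

lemma left_dvd_mat_invertible_equiv_iff:
  fixes P Q Q' B A :: "'a::semiring_1 mat"
  assumes B: "B \<in> carrier_mat n n" and A: "A \<in> carrier_mat n n"
    and P: "P \<in> carrier_mat n n" "invertible_mat P"
    and Q: "Q \<in> carrier_mat n n" "invertible_mat Q"
    and Q': "Q' \<in> carrier_mat n n" "invertible_mat Q'"
  shows "left_dvd_mat n (P * (B * Q')) (P * (A * Q)) \<longleftrightarrow> left_dvd_mat n B A"
  using assms
  by (simp add: left_dvd_mat_mult_left_iff left_dvd_mat_mult_right_iff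
      left_dvd_mat_mult_right_divisor_iff)

lemma ex_L_set_factor_iff_left_dvd_mat:
  fixes E \<Phi> P\<^sub>A P\<^sub>B P' :: "'a::comm_ring_1 mat"
  assumes E: "E \<in> carrier_mat n n" and \<Phi>: "\<Phi> \<in> carrier_mat n n"
    and P\<^sub>A: "P\<^sub>A \<in> carrier_mat n n" and P': "P' \<in> carrier_mat n n"
    and inverse: "P\<^sub>A * P' = 1\<^sub>m n" "P' * P\<^sub>A = 1\<^sub>m n"
    and P\<^sub>B: "P\<^sub>B \<in> carrier_mat n n" "invertible_mat P\<^sub>B"
  shows "(\<exists>L \<in> L_set n E \<Phi>. P\<^sub>B = L * P\<^sub>A) \<longleftrightarrow> left_dvd_mat n \<Phi> (P\<^sub>B * P' * E)"
proof
  assume "\<exists>L \<in> L_set n E \<Phi>. P\<^sub>B = L * P\<^sub>A"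
  then obtain L S where L: "L \<in> carrier_mat n n" "P\<^sub>B = L * P\<^sub>A"
    and S: "S \<in> carrier_mat n n" "L * E = \<Phi> * S"
    unfolding L_set_def by blast
  have "P\<^sub>B * P' = L"
    using L P\<^sub>A P' inverse by (simp add: assoc_mult_mat[of _ n n _ n _ n])
  with S show "left_dvd_mat n \<Phi> (P\<^sub>B * P' * E)"
    unfolding left_dvd_mat_def by auto
next
  assume "left_dvd_mat n \<Phi> (P\<^sub>B * P' * E)"
  then obtain S where S: "S \<in> carrier_mat n n" "P\<^sub>B * P' * E = \<Phi> * S"
    unfolding left_dvd_mat_def by blast
  have "invertible_mat P'"
    using invertible_matI[OF P' P\<^sub>A inverse(2,1)] .
  then have "P\<^sub>B * P' \<in> L_set n E \<Phi>"
    using P\<^sub>B P' S unfolding L_set_def by (auto intro: invertible_mult_mat)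
  moreover have "P\<^sub>B = P\<^sub>B * P' * P\<^sub>A"
    using P\<^sub>B(1) P' P\<^sub>A inverse by (simp add: assoc_mult_mat[of _ n n _ n _ n])
  ultimately show "\<exists>L \<in> L_set n E \<Phi>. P\<^sub>B = L * P\<^sub>A" ..
qed

theorem theorem4p2:
  fixes E \<Phi> A B P\<^sub>A Q\<^sub>A P\<^sub>B Q\<^sub>B :: "'a::idom mat"
  assumes edd: "elementary_divisor_domain TYPE('a)"
    and E: "E \<in> carrier_mat n n" "d_matrix E"
    and Phi: "\<Phi> \<in> carrier_mat n n" "d_matrix \<Phi>"
    and PQ: "P\<^sub>A \<in> carrier_mat n n" "Q\<^sub>A \<in> carrier_mat n n"
            "P\<^sub>B \<in> carrier_mat n n" "Q\<^sub>B \<in> carrier_mat n n"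
    and inv: "invertible_mat P\<^sub>A" "invertible_mat Q\<^sub>A"
             "invertible_mat P\<^sub>B" "invertible_mat Q\<^sub>B"
    and AB: "A \<in> carrier_mat n n" "B \<in> carrier_mat n n"
    and A_def: "P\<^sub>A * A * Q\<^sub>A = E"
    and B_def: "P\<^sub>B * B * Q\<^sub>B = \<Phi>"
  shows "(\<exists>C \<in> carrier_mat n n. A = B * C) \<longleftrightarrow> (\<exists>L \<in> L_set n E \<Phi>. P\<^sub>B = L * P\<^sub>A)"
proof -
  obtain P' where P': "P' \<in> carrier_mat n n" "P\<^sub>A * P' = 1\<^sub>m n" "P' * P\<^sub>A = 1\<^sub>m n"
    using invertible_matE[OF PQ(1) inv(1)] by blast
  have "P\<^sub>B * (B * Q\<^sub>B) = \<Phi>"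
    using B_def PQ AB by (simp add: assoc_mult_mat[of _ n n _ n _ n])
  moreover have "P\<^sub>B * (A * Q\<^sub>A) = P\<^sub>B * P' * E"
  proof -
    have "P' * E = (P' * P\<^sub>A) * (A * Q\<^sub>A)"
      unfolding A_def[symmetric] using PQ AB P'(1) by (simp add: assoc_mult_mat[of _ n n _ n _ n])
    then show ?thesis
      using PQ AB P' E(1) by (simp add: assoc_mult_mat[of _ n n _ n _ n])
  qed
  ultimately have "left_dvd_mat n B A \<longleftrightarrow> left_dvd_mat n \<Phi> (P\<^sub>B * P' * E)"
    using left_dvd_mat_invertible_equiv_iff[OF AB(2,1) PQ(3) inv(3) PQ(2) inv(2) PQ(4) inv(4)]
    by simp
  also have "\<dots> \<longleftrightarrow> (\<exists>L \<in> L_set n E \<Phi>. P\<^sub>B = L * P\<^sub>A)"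
    using ex_L_set_factor_iff_left_dvd_mat[OF E(1) Phi(1) PQ(1) P' PQ(3) inv(3)] by simp
  finally show ?thesis
    unfolding left_dvd_mat_def .
qed

end
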